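(* Let $i,j,k,s$ be distinct jobs such that $(i,k)$, $(j,k)$, $(s,i)$ and $(s,j)$ are all red pairs. Then, in the schedule produced by $1$-SORT, $D(i,j)\le\left(1+\frac{1}{\nu(\mu+1)}\right)D^*(i,j)$.
   Context: Setting: single machine, jobs $J=\{1,\dots,n\}$, each job $j$ with test time $t_j\ge0$ and processing time $p_j\ge0$ (revealed only when the test is executed); each job's test must be executed before its processing part, which may start any time after the test; operations are non-preemptive and the machine does one at a time. $\sigma_j=t_j+p_j$, $m_j=\max\{t_j,p_j\}$. Standing assumption (general position): no two of the $3n$ numbers $t_j,p_j,\sigma_j$ are equal. Algorithm $1$-SORT: keep a priority queue of available operations, initially the test of every job $j$ with priority $t_j$; repeatedly remove a minimum-priority operation and execute it immediately; after executing the test of $j$, insert the processing part of $j$ with priority $p_j$. For distinct jobs $j,k$, let $d_{k,j}$ be the total amount of time during which operations of $k$ are executed before the completion time of $j$, and $D(j,k)=d_{j,k}+d_{k,j}$, evaluated for the $1$-SORT schedule; $D^*(j,k)=\min\{\sigma_j,\sigma_k\}$. Fix constants $\mu>1$ and $0<\nu<1$ with $\mu\nu>1$ and $1+\frac1\mu\le\nu+\nu^2$. A job $j$ is imbalanced if $m_j\ge\mu\min\{t_j,p_j\}$. For distinct jobs $j,k$, the ordered pair $(j,k)$ is a red pair if $j$ is imbalanced, $m_j\ge t_k\ge\nu m_j$, and $p_k\ge\nu t_k$. *)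

theory Defs
  imports Complex_Main
begin

datatype 'a oper = Test 'a | Proc 'a

fun job :: "'a oper \<Rightarrow> 'a" where
  "job (Test j) = j"
| "job (Proc j) = j"

fun dur :: "('a \<Rightarrow> real) \<Rightarrow> ('a \<Rightarrow> real) \<Rightarrow> 'a oper \<Rightarrow> real" where
  "dur t p (Test j) = t j"
| "dur t p (Proc j) = p j"

definition prio :: "('a \<Rightarrow> real) \<Rightarrow> ('a \<Rightarrow> real) \<Rightarrow> 'a oper \<Rightarrow> real" where
  "prio t p = dur t p"

fun sort1_run :: "('a \<Rightarrow> real) \<Rightarrow> ('a \<Rightarrow> real) \<Rightarrow> nat \<Rightarrow> 'a oper set \<Rightarrow> 'a oper list" where
  "sort1_run t p 0 Q = []"
| "sort1_run t p (Suc n) Q =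
     (if Q = {} then []
      else (let q = (ARG_MIN (prio t p) x. x \<in> Q)
            in q # sort1_run t p n
                   ((Q - {q}) \<union> (case q of Test j \<Rightarrow> {Proc j} | Proc j \<Rightarrow> {}))))"

text \<open>The sequence of operations executed by 1-SORT on job set J (no idle time).\<close>
definition sort1_schedule :: "'a set \<Rightarrow> ('a \<Rightarrow> real) \<Rightarrow> ('a \<Rightarrow> real) \<Rightarrow> 'a oper list" where
  "sort1_schedule J t p = sort1_run t p (2 * card J) (Test ` J)"

text \<open>d k j: total time during which operations of k are executed before the completion
  time of j (the completion of the processing part of j) in the 1-SORT schedule.\<close>
definition dd :: "'a set \<Rightarrow> ('a \<Rightarrow> real) \<Rightarrow> ('a \<Rightarrow> real) \<Rightarrow> 'a \<Rightarrow> 'a \<Rightarrow> real" where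
  "dd J t p k j = sum_list (map (dur t p)
      (filter (\<lambda>q. job q = k) (takeWhile (\<lambda>q. q \<noteq> Proc j) (sort1_schedule J t p))))"

definition DD :: "'a set \<Rightarrow> ('a \<Rightarrow> real) \<Rightarrow> ('a \<Rightarrow> real) \<Rightarrow> 'a \<Rightarrow> 'a \<Rightarrow> real" where
  "DD J t p j k = dd J t p j k + dd J t p k j"

definition Dstar :: "('a \<Rightarrow> real) \<Rightarrow> ('a \<Rightarrow> real) \<Rightarrow> 'a \<Rightarrow> 'a \<Rightarrow> real" where
  "Dstar t p j k = min (t j + p j) (t k + p k)"

definition general_position :: "'a set \<Rightarrow> ('a \<Rightarrow> real) \<Rightarrow> ('a \<Rightarrow> real) \<Rightarrow> bool" where
  "general_position J t p \<longleftrightarrow>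
     (\<forall>j\<in>J. \<forall>k\<in>J.
        (t j = t k \<longrightarrow> j = k) \<and> (p j = p k \<longrightarrow> j = k) \<and>
        (t j + p j = t k + p k \<longrightarrow> j = k) \<and>
        t j \<noteq> p k \<and> t j \<noteq> t k + p k \<and> p j \<noteq> t k + p k)"

definition imbalanced :: "real \<Rightarrow> ('a \<Rightarrow> real) \<Rightarrow> ('a \<Rightarrow> real) \<Rightarrow> 'a \<Rightarrow> bool" where
  "imbalanced \<mu> t p j \<longleftrightarrow> max (t j) (p j) \<ge> \<mu> * min (t j) (p j)"

definition red_pair :: "real \<Rightarrow> real \<Rightarrow> ('a \<Rightarrow> real) \<Rightarrow> ('a \<Rightarrow> real) \<Rightarrow> 'a \<Rightarrow> 'a \<Rightarrow> bool" where
  "red_pair \<mu> \<nu> t p j k \<longleftrightarrow> j \<noteq> k \<and> imbalanced \<mu> t p j \<and>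
     max (t j) (p j) \<ge> t k \<and> t k \<ge> \<nu> * max (t j) (p j) \<and> p k \<ge> \<nu> * t k"

end

theory Submission
  imports Defs
begin

text \<open>Since j and i are imbalanced (they head the red pairs (j,k) and (i,k)) while their
  processing part is at least a \<nu>-fraction of their test (they are targets of the red pairs
  (s,j) and (s,i)), \<mu>\<nu> > 1 forces p_j \<ge> \<mu> t_j and p_i \<ge> \<mu> t_i. Say p_i < p_j. Then both
  operations of i have smaller priority than Proc j, so 1-SORT completes i before it starts
  the processing part of j, and D(i,j) \<le> \<sigma>_i + t_j. Finally t_i, t_j both lie in
  [\<nu> M, M] with M = m_s, so \<sigma>_i, \<sigma>_j \<ge> \<nu>(\<mu>+1) M \<ge> \<nu>(\<mu>+1) t_j.\<close>

definition sort1_queue_after :: "'a oper \<Rightarrow> 'a oper set \<Rightarrow> 'a oper set" where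
  "sort1_queue_after q Q = (Q - {q}) \<union> (case q of Test j \<Rightarrow> {Proc j} | Proc j \<Rightarrow> {})"

lemma sort1_run_Suc_cases:
  assumes "finite Q" "Q \<noteq> {}"
  obtains q where "q \<in> Q" "\<And>z. z \<in> Q \<Longrightarrow> prio t p q \<le> prio t p z"
    and "sort1_run t p (Suc n) Q = q # sort1_run t p n (sort1_queue_after q Q)"
proof
  let ?q = "ARG_MIN (prio t p) x. x \<in> Q"
  show "?q \<in> Q" using arg_min_if_finite(1)[OF assms] unfolding arg_min_on_def .
  show "prio t p ?q \<le> prio t p z" if "z \<in> Q" for z
    using arg_min_least[OF assms that] unfolding arg_min_on_def .
  show "sort1_run t p (Suc n) Q = ?q # sort1_run t p n (sort1_queue_after ?q Q)"
    using assms(2) by (simp add: Let_def sort1_queue_after_def)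
qed

lemma finite_sort1_queue_after: "finite Q \<Longrightarrow> finite (sort1_queue_after q Q)"
  unfolding sort1_queue_after_def by (auto split: oper.splits)

lemma sort1_run_distinct_subset:
  assumes "finite Q" "\<forall>x. Test x \<in> Q \<longrightarrow> Proc x \<notin> Q"
  shows "distinct (sort1_run t p n Q) \<and>
         set (sort1_run t p n Q) \<subseteq> Q \<union> Proc ` {x. Test x \<in> Q}"
  using assms
proof (induction n arbitrary: Q)
  case (Suc n)
  show ?case
  proof (cases "Q = {}")
    case False
    then obtain q where qQ: "q \<in> Q"
      and run: "sort1_run t p (Suc n) Q = q # sort1_run t p n (sort1_queue_after q Q)"
      using sort1_run_Suc_cases[OF Suc.prems(1)] by metis
    let ?Q' = "sort1_queue_after q Q"
    have "\<forall>x. Test x \<in> ?Q' \<longrightarrow> Proc x \<notin> ?Q'"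
      using Suc.prems(2) unfolding sort1_queue_after_def by (auto split: oper.splits)
    from Suc.IH[OF finite_sort1_queue_after[OF Suc.prems(1)] this] have IH:
      "distinct (sort1_run t p n ?Q') \<and> set (sort1_run t p n ?Q') \<subseteq> ?Q' \<union> Proc ` {x. Test x \<in> ?Q'}" .
    have "?Q' \<union> Proc ` {x. Test x \<in> ?Q'} \<subseteq> (Q \<union> Proc ` {x. Test x \<in> Q}) - {q}"
      using qQ Suc.prems(2) unfolding sort1_queue_after_def by (auto split: oper.splits)
    with IH qQ show ?thesis unfolding run by auto
  qed simp
qed simp

lemma sort1_run_Proc_before:
  assumes "finite Q" "Test a \<in> Q \<or> Proc a \<in> Q"
    and "t a < prio t p y" "p a < prio t p y" "y \<in> set (sort1_run t p n Q)"
  shows "Proc a \<in> set (takeWhile (\<lambda>q. q \<noteq> y) (sort1_run t p n Q))"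
  using assms
proof (induction n arbitrary: Q)
  case (Suc n)
  have "Q \<noteq> {}" using Suc.prems(2) by auto
  then obtain q where qmin: "\<And>z. z \<in> Q \<Longrightarrow> prio t p q \<le> prio t p z"
    and run: "sort1_run t p (Suc n) Q = q # sort1_run t p n (sort1_queue_after q Q)"
    using sort1_run_Suc_cases[OF Suc.prems(1)] by metis
  let ?Q' = "sort1_queue_after q Q"
  have "prio t p q < prio t p y"
    using Suc.prems(2-4) qmin[of "Test a"] qmin[of "Proc a"] by (auto simp: prio_def)
  then have "q \<noteq> y" by blast
  show ?case
  proof (cases "q = Proc a")
    case False
    have "Test a \<in> ?Q' \<or> Proc a \<in> ?Q'"
      using Suc.prems(2) False unfolding sort1_queue_after_def by (auto split: oper.splits)
    moreover have "y \<in> set (sort1_run t p n ?Q')"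
      using Suc.prems(5) \<open>q \<noteq> y\<close> unfolding run by simp
    ultimately show ?thesis
      using Suc.IH[OF finite_sort1_queue_after[OF Suc.prems(1)] _ Suc.prems(3,4)] \<open>q \<noteq> y\<close>
      unfolding run by simp
  qed (use \<open>q \<noteq> y\<close> in \<open>unfold run, simp\<close>)
qed simp

lemma takeWhile_neq_asym:
  "x \<in> set (takeWhile (\<lambda>q. q \<noteq> y) xs) \<Longrightarrow> y \<notin> set (takeWhile (\<lambda>q. q \<noteq> x) xs)"
proof (induction xs)
  case (Cons a xs)
  then show ?case
    by (cases "a = y"; cases "a = x";
        simp only: takeWhile.simps if_True if_False list.set simp_thms Un_iff insert_iff empty_iff;
        blast)
qed simp

lemma sum_list_distinct_le_sum:
  fixes f :: "'b \<Rightarrow> real"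
  assumes "distinct xs" "set xs \<subseteq> S" "finite S" "\<forall>x\<in>S. f x \<ge> 0"
  shows "sum_list (map f xs) \<le> sum f S"
  using assms by (simp add: sum_list_distinct_conv_sum_set) (rule sum_mono2, auto)

lemma sort1_schedule_distinct_subset:
  assumes "finite J"
  shows "distinct (sort1_schedule J t p) \<and> set (sort1_schedule J t p) \<subseteq> Test ` J \<union> Proc ` J"
  using sort1_run_distinct_subset[of "Test ` J" t p "2 * card J"] assms
  unfolding sort1_schedule_def by auto

lemma job_eq_iff: "job q = a \<longleftrightarrow> q = Test a \<or> q = Proc a"
  by (cases q) auto

lemma dd_bound:
  assumes "finite J" "\<forall>x\<in>J. t x \<ge> 0 \<and> p x \<ge> 0" "a \<in> J"
    and "set (filter (\<lambda>q. job q = a) (takeWhile (\<lambda>q. q \<noteq> Proc b) (sort1_schedule J t p))) \<subseteq> S"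
    and "S \<subseteq> {Test a, Proc a}"
  shows "dd J t p a b \<le> sum (dur t p) S"
  unfolding dd_def
proof (rule sum_list_distinct_le_sum)
  show "finite S" using assms(5) finite_subset by blast
  show "\<forall>x\<in>S. dur t p x \<ge> 0" using assms(2,3,5) by auto
qed (use assms(4) sort1_schedule_distinct_subset[OF assms(1)] in auto)

lemma dd_le_sigma:
  assumes "finite J" "\<forall>x\<in>J. t x \<ge> 0 \<and> p x \<ge> 0" "a \<in> J"
  shows "dd J t p a b \<le> t a + p a"
  using dd_bound[OF assms(1-3), of b "{Test a, Proc a}"] by (auto simp: job_eq_iff)

lemma dd_le_test_if_Proc_smaller:
  assumes "finite J" "\<forall>x\<in>J. t x \<ge> 0 \<and> p x \<ge> 0" "a \<in> J" "b \<in> J"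
    and "t a < p b" "p a < p b"
  shows "dd J t p b a \<le> t b"
proof -
  let ?L = "sort1_schedule J t p"
  have "Proc b \<notin> set (takeWhile (\<lambda>q. q \<noteq> Proc a) ?L)"
  proof (cases "Proc b \<in> set ?L")
    case True
    have "Proc a \<in> set (takeWhile (\<lambda>q. q \<noteq> Proc b) ?L)"
      unfolding sort1_schedule_def
      by (rule sort1_run_Proc_before)
        (use assms True in \<open>auto simp: prio_def sort1_schedule_def\<close>)
    then show ?thesis by (rule takeWhile_neq_asym)
  qed (auto dest: set_takeWhileD)
  then show ?thesis
    using dd_bound[OF assms(1,2,4), of a "{Test b}"] by (auto simp: job_eq_iff)
qed

lemma DD_le_if_Proc_smaller:
  assumes "finite J" "\<forall>x\<in>J. t x \<ge> 0 \<and> p x \<ge> 0" "a \<in> J" "b \<in> J"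
    and "t a < p b" "p a < p b"
  shows "DD J t p a b \<le> t a + p a + t b"
  using dd_le_sigma[OF assms(1-3), of b] dd_le_test_if_Proc_smaller[OF assms]
  unfolding DD_def by simp

lemma DD_commute: "DD J t p a b = DD J t p b a"
  unfolding DD_def by simp

lemma Dstar_commute: "Dstar t p a b = Dstar t p b a"
  unfolding Dstar_def by (simp add: min.commute)

lemma imbalanced_red_target_Proc_dominant:
  assumes "imbalanced \<mu> t p j" "red_pair \<mu> \<nu> t p s j"
    and "t j \<ge> 0" "t j \<noteq> p j" "\<mu> > 1" "\<mu> * \<nu> > 1"
  shows "t j < p j" "\<mu> * t j \<le> p j"
proof -
  have imb: "max (t j) (p j) \<ge> \<mu> * min (t j) (p j)" and pt: "p j \<ge> \<nu> * t j"
    using assms(1,2) unfolding imbalanced_def red_pair_def by auto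
  have "\<not> p j < t j"
  proof
    assume "p j < t j"
    then have "\<mu> * p j \<le> t j" using imb by (simp add: max_def min_def)
    moreover have "(\<mu> * \<nu>) * t j \<le> \<mu> * p j"
      using mult_left_mono[OF pt, of \<mu>] assms(5) by (simp add: mult.assoc)
    ultimately have "(\<mu> * \<nu>) * t j \<le> 1 * t j" by simp
    moreover have "t j > 0" using \<open>p j < t j\<close> pt assms(3) by (cases "t j = 0") auto
    ultimately show False using assms(6) by (simp add: mult_le_cancel_right)
  qed
  then show "t j < p j" using assms(4) by simp
  then show "\<mu> * t j \<le> p j" using imb by (simp add: max_def min_def)
qed

lemma approximation_bound:
  fixes ta pa tb pb M \<mu> \<nu> D :: real
  assumes "ta \<le> M" "tb \<le> M" "\<nu> * M \<le> ta" "\<nu> * M \<le> tb" "\<mu> * ta \<le> pa" "\<mu> * tb \<le> pb"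
    and "pa < pb" "\<mu> > 1" "\<nu> > 0" "D \<le> ta + pa + tb"
  shows "D \<le> (1 + 1 / (\<nu> * (\<mu> + 1))) * min (ta + pa) (tb + pb)"
proof -
  define m where "m = min (ta + pa) (tb + pb)"
  have "(\<mu> + 1) * (\<nu> * M) \<le> (\<mu> + 1) * ta" "(\<mu> + 1) * (\<nu> * M) \<le> (\<mu> + 1) * tb"
    using assms(3,4,8) by (auto intro: mult_left_mono)
  then have "(\<nu> * (\<mu> + 1)) * M \<le> m"
    using assms(5,6) unfolding m_def by (auto simp: algebra_simps min_def)
  moreover have "\<nu> * (\<mu> + 1) > 0" using assms(8,9) by simp
  ultimately have "M \<le> m / (\<nu> * (\<mu> + 1))" by (simp add: pos_le_divide_eq mult.commute)
  moreover have "D \<le> m + M" using assms(1,2,7,10) unfolding m_def by (auto simp: min_def)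
  ultimately have "D \<le> m + m / (\<nu> * (\<mu> + 1))" by simp
  also have "\<dots> = (1 + 1 / (\<nu> * (\<mu> + 1))) * m" by (simp add: algebra_simps)
  finally show ?thesis unfolding m_def .
qed

lemma DD_red_targets_le:
  assumes "finite J" "\<forall>x\<in>J. t x \<ge> 0 \<and> p x \<ge> 0" "a \<in> J" "b \<in> J"
    and "\<mu> > 1" "\<nu> > 0" "t a \<le> M" "t b \<le> M" "\<nu> * M \<le> t a" "\<nu> * M \<le> t b"
    and "t a < p a" "\<mu> * t a \<le> p a" "\<mu> * t b \<le> p b" "p a < p b"
  shows "DD J t p a b \<le> (1 + 1 / (\<nu> * (\<mu> + 1))) * Dstar t p a b"
  unfolding Dstar_def
  by (rule approximation_bound[OF assms(7-10,12,13,14,5,6)])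
    (use DD_le_if_Proc_smaller[OF assms(1-4)] assms(11,14) in auto)

theorem mainTheorem10:
  fixes J :: "'a set" and t p :: "'a \<Rightarrow> real" and \<mu> \<nu> :: real and i j k s :: 'a
  assumes "finite J"
    and "\<forall>x\<in>J. t x \<ge> 0 \<and> p x \<ge> 0"
    and "general_position J t p"
    and "\<mu> > 1" and "0 < \<nu>" and "\<nu> < 1" and "\<mu> * \<nu> > 1"
    and "1 + 1 / \<mu> \<le> \<nu> + \<nu>\<^sup>2"
    and "i \<in> J" "j \<in> J" "k \<in> J" "s \<in> J"
    and "distinct [i, j, k, s]"
    and "red_pair \<mu> \<nu> t p i k" "red_pair \<mu> \<nu> t p j k"
    and "red_pair \<mu> \<nu> t p s i" "red_pair \<mu> \<nu> t p s j"
  shows "DD J t p i j \<le> (1 + 1 / (\<nu> * (\<mu> + 1))) * Dstar t p i j"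
proof -
  define M where "M = max (t s) (p s)"
  have gp: "t i \<noteq> p i" "t j \<noteq> p j" "p i \<noteq> p j"
    using assms(3,9,10,13) unfolding general_position_def by auto
  have window: "t i \<le> M" "\<nu> * M \<le> t i" "t j \<le> M" "\<nu> * M \<le> t j"
    using assms(16,17) unfolding red_pair_def M_def by auto
  have nonneg: "t i \<ge> 0" "t j \<ge> 0" using assms(2,9,10) by auto
  have "imbalanced \<mu> t p i" "imbalanced \<mu> t p j"
    using assms(14,15) unfolding red_pair_def by auto
  then have i_dom: "t i < p i" "\<mu> * t i \<le> p i" and j_dom: "t j < p j" "\<mu> * t j \<le> p j"
    using imbalanced_red_target_Proc_dominant[OF _ assms(16) nonneg(1) gp(1) assms(4,7)]
      imbalanced_red_target_Proc_dominant[OF _ assms(17) nonneg(2) gp(2) assms(4,7)]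
    by auto
  show ?thesis
  proof (cases "p i < p j")
    case True
    from DD_red_targets_le[OF assms(1,2,9,10,4,5) window(1,3,2,4)
        i_dom j_dom(2) True]
    show ?thesis .
  next
    case False
    then have "p j < p i" using gp(3) by simp
    from DD_red_targets_le[OF assms(1,2,10,9,4,5) window(3,1,4,2)
        j_dom i_dom(2) this]
    show ?thesis by (simp add: DD_commute Dstar_commute)
  qed
qed

end
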